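(* (1) $R\setminus K_\Gamma$ is a countable set. (2) There is $M\in\mathrm{GL}(3,\mathbb R)$ such that every matrix $M^{-1}BM$, $B\in\Gamma$, has all entries strictly positive and determinant one, and there is $c>0$ such that for every $B\in\Gamma$, $\min_{j,k}(M^{-1}BM)_{jk}/\max_{j,k}(M^{-1}BM)_{jk}\ge c$.
   Context: Let $A_1=\begin{pmatrix}1&1&1\\0&1&0\\0&0&1\end{pmatrix}$, $A_2=\begin{pmatrix}1&0&0\\1&1&1\\0&0&1\end{pmatrix}$, $A_3=\begin{pmatrix}1&0&0\\0&1&0\\1&1&1\end{pmatrix}$, $S=\{(x,y,z):x,y,z\ge0,x+y+z=1\}$, and $f_i(v)=A_iv/(\text{sum of coordinates of }A_iv)$ on $S$. The Rauzy gasket $R$ is the unique nonempty compact $R\subset S$ with $R=\bigcup_if_i(R)$; for $\omega\in\{1,2,3\}^{\mathbb N}$, $\Pi(\omega)$ denotes the unique point of $\bigcap_n f_{\omega_1}\circ\cdots\circ f_{\omega_n}(S)$, so $R=\Pi(\{1,2,3\}^{\mathbb N})$. Let $\Gamma=\{A_i^nA_j: i\ne j\in\{1,2,3\},\ n\ge1\}$ and let $K_\Gamma=\Pi(\Sigma')$, where $\Sigma'$ is the set of sequences in $\{1,2,3\}^{\mathbb N}$ that are infinite concatenations of blocks $i^nj$ ($i\ne j$, $n\ge1$), i.e. the limit set of the infinite system $\{f_{B}\}_{B\in\Gamma}$. *)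

theory Defs
  imports "HOL-Analysis.Analysis"
begin

text \<open>The three Rauzy matrices (row-major: row i is A $ i), indexed by symbols 1, 2, 3.\<close>

definition A1 :: "real^3^3" where
  "A1 = vector [vector [1,1,1], vector [0,1,0], vector [0,0,1]]"
definition A2 :: "real^3^3" where
  "A2 = vector [vector [1,0,0], vector [1,1,1], vector [0,0,1]]"
definition A3 :: "real^3^3" where
  "A3 = vector [vector [1,0,0], vector [0,1,0], vector [1,1,1]]"

definition rauzyA :: "nat \<Rightarrow> real^3^3" where
  "rauzyA i = (if i = 1 then A1 else if i = 2 then A2 else A3)"

definition symbols :: "nat set" where "symbols = {1, 2, 3}"

definition simplexS :: "(real^3) set" where
  "simplexS = {v. (\<forall>k. 0 \<le> v $ k) \<and> (\<Sum>k\<in>UNIV. v $ k) = 1}"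

definition rauzyF :: "nat \<Rightarrow> real^3 \<Rightarrow> real^3" where
  "rauzyF i v = (1 / (\<Sum>k\<in>UNIV. (rauzyA i *v v) $ k)) *\<^sub>R (rauzyA i *v v)"

text \<open>Composition f_{w 0} o ... o f_{w (n-1)} (sequences are indexed from 0).\<close>
definition fcomp :: "(nat \<Rightarrow> nat) \<Rightarrow> nat \<Rightarrow> real^3 \<Rightarrow> real^3" where
  "fcomp w n = foldr (\<lambda>k g. rauzyF (w k) \<circ> g) [0..<n] id"

definition codingPi :: "(nat \<Rightarrow> nat) \<Rightarrow> real^3" where
  "codingPi w = (THE x. x \<in> (\<Inter>n. fcomp w n ` simplexS))"

definition fullShift :: "(nat \<Rightarrow> nat) set" where
  "fullShift = {w. \<forall>n. w n \<in> symbols}"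

definition rauzyGasket :: "(real^3) set" where
  "rauzyGasket = codingPi ` fullShift"

definition isBlock :: "(nat \<Rightarrow> nat) \<Rightarrow> nat \<Rightarrow> nat \<Rightarrow> bool" where
  "isBlock w a b \<longleftrightarrow> a + 2 \<le> b \<and>
     (\<exists>i j. i \<in> symbols \<and> j \<in> symbols \<and> i \<noteq> j \<and>
        (\<forall>m. a \<le> m \<and> m < b - 1 \<longrightarrow> w m = i) \<and> w (b - 1) = j)"

definition SigmaGamma :: "(nat \<Rightarrow> nat) set" where
  "SigmaGamma = {w. \<exists>t :: nat \<Rightarrow> nat. t 0 = 0 \<and> (\<forall>k. isBlock w (t k) (t (Suc k)))}"

definition KGamma :: "(real^3) set" where
  "KGamma = codingPi ` SigmaGamma"

definition matpow :: "real^3^3 \<Rightarrow> nat \<Rightarrow> real^3^3" where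
  "matpow B n = ((\<lambda>C. B ** C) ^^ n) (mat 1)"

definition GammaSet :: "(real^3^3) set" where
  "GammaSet = {matpow (rauzyA i) n ** rauzyA j | i j n.
      i \<in> symbols \<and> j \<in> symbols \<and> i \<noteq> j \<and> n \<ge> 1}"

end

theory Submission
  imports Defs
begin

(* A sequence over {1,2,3} that is not eventually constant is cut, at each change of symbol,
   into maximal runs i^n followed by a different symbol j, i.e. into blocks of Gamma. Hence
   R - K_Gamma lies in the image of the countably many eventually constant sequences.

   Each A_i satisfies (A_i - I)^2 = 0, so A_i^n = I + n (A_i - I) and every entry of
   M^-1 A_i^n A_j M is affine in n. For M = 7I - J (J the all-ones matrix, M^-1 = (4I + J)/28)
   these entries all lie between n/28 and 55n/28 once n >= 1, which gives positivity and the
   ratio bound c = 1/55; the determinants are 1 because det A_i = 1. *)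

definition eventually_const :: "(nat \<Rightarrow> 'a) \<Rightarrow> bool" where
  "eventually_const w \<longleftrightarrow> (\<exists>c. \<forall>\<^sub>F m in sequentially. w m = c)"

lemma countable_eventually_const:
  "countable {w :: nat \<Rightarrow> 'a::countable. eventually_const w}"
proof (rule countable_subset)
  let ?seq = "\<lambda>(xs :: 'a list, c). \<lambda>m. if m < length xs then xs ! m else c"
  show "{w. eventually_const w} \<subseteq> range ?seq"
  proof
    fix w :: "nat \<Rightarrow> 'a"
    assume "w \<in> {w. eventually_const w}"
    then obtain N c where "\<forall>m\<ge>N. w m = c"
      by (auto simp: eventually_const_def eventually_sequentially)
    then have "w = ?seq (map w [0..<N], c)" by (auto simp: fun_eq_iff)
    then show "w \<in> range ?seq" by (rule range_eqI)
  qed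
  show "countable (range ?seq)" by (rule countable_image) simp
qed

lemma isBlock_upto_change:
  assumes "w \<in> fullShift" and "a < b" and "w a \<noteq> w b"
    and "\<forall>m. a \<le> m \<and> m < b \<longrightarrow> w m = w a"
  shows "isBlock w a (Suc b)"
  unfolding isBlock_def diff_Suc_1
proof (intro conjI)
  show "a + 2 \<le> Suc b"
    using assms(2) by simp
  have "w a \<in> symbols" "w b \<in> symbols"
    using assms(1) by (simp_all add: fullShift_def)
  \<comment> \<open>Kept away from the simplifier: the run hypothesis rewrites \<open>w a\<close> to itself forever.\<close>
  with assms(3,4) have "w a \<in> symbols \<and> w b \<in> symbols \<and> w a \<noteq> w b \<and>
      (\<forall>m. a \<le> m \<and> m < b \<longrightarrow> w m = w a) \<and> w b = w b"
    by (intro conjI refl)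
  then show "\<exists>i j. i \<in> symbols \<and> j \<in> symbols \<and> i \<noteq> j \<and>
      (\<forall>m. a \<le> m \<and> m < b \<longrightarrow> w m = i) \<and> w b = j"
    by (intro exI)
qed

lemma not_eventually_const_in_SigmaGamma:
  assumes "w \<in> fullShift" and "\<not> eventually_const w"
  shows "w \<in> SigmaGamma"
proof -
  define next_change where "next_change a = (LEAST b. a < b \<and> w b \<noteq> w a)" for a
  have "\<exists>b. a < b \<and> w b \<noteq> w a" for a
  proof -
    from assms(2) obtain m where "Suc a \<le> m" "w m \<noteq> w a"
      unfolding eventually_const_def eventually_sequentially by blast
    then show ?thesis by (intro exI[of _ m]) simp
  qed
  then have change: "a < next_change a \<and> w (next_change a) \<noteq> w a" for a
    unfolding next_change_def by (rule LeastI_ex)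
  have const: "\<forall>m. a \<le> m \<and> m < next_change a \<longrightarrow> w m = w a" for a
  proof (intro allI impI)
    fix m
    assume "a \<le> m \<and> m < next_change a"
    then show "w m = w a"
      using not_less_Least[of m "\<lambda>b. a < b \<and> w b \<noteq> w a"] unfolding next_change_def
      by (cases "m = a") auto
  qed
  define t where "t = rec_nat 0 (\<lambda>_ a. Suc (next_change a))"
  have t_0: "t 0 = 0" and t_Suc: "t (Suc k) = Suc (next_change (t k))" for k
    by (simp_all add: t_def)
  have "isBlock w (t k) (t (Suc k))" for k
    unfolding t_Suc
    using isBlock_upto_change[OF assms(1) change[THEN conjunct1]
        change[THEN conjunct2, symmetric] const] .
  with t_0 show ?thesis
    unfolding SigmaGamma_def by blast
qed

lemma countable_rauzyGasket_diff_KGamma: "countable (rauzyGasket - KGamma)"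
proof (rule countable_subset)
  have "fullShift - SigmaGamma \<subseteq> {w. eventually_const w}"
    using not_eventually_const_in_SigmaGamma by blast
  then have "codingPi ` (fullShift - SigmaGamma) \<subseteq> codingPi ` {w. eventually_const w}"
    by (rule image_mono)
  then show "rauzyGasket - KGamma \<subseteq> codingPi ` {w. eventually_const w}"
    unfolding rauzyGasket_def KGamma_def using image_diff_subset by blast
  show "countable (codingPi ` {w :: nat \<Rightarrow> nat. eventually_const w})"
    by (intro countable_image countable_eventually_const)
qed

lemma matrix_add_rdistrib: "((A::'a::semiring_1^'n^'m) + B) ** C = A ** C + B ** C"
  by (vector matrix_matrix_mult_def sum.distrib[symmetric] field_simps)

lemma matpow_Suc: "matpow B (Suc n) = B ** matpow B n"
  by (simp add: matpow_def)

lemma matpow_unipotent: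
  fixes B :: "real^3^3"
  assumes "(B - mat 1) ** (B - mat 1) = 0"
  shows "matpow B n = mat 1 + real n *\<^sub>R (B - mat 1)"
proof (induction n)
  case 0
  show ?case by (simp add: matpow_def)
next
  case (Suc n)
  define E where "E = B - mat 1"
  have "matpow B (Suc n) = (mat 1 + E) ** (mat 1 + real n *\<^sub>R E)"
    by (simp add: matpow_Suc Suc E_def)
  also have "\<dots> = mat 1 + real (Suc n) *\<^sub>R E + real n *\<^sub>R (E ** E)"
    by (simp add: matrix_add_ldistrib matrix_add_rdistrib matrix_scalar_ac
        scalar_matrix_assoc[symmetric] algebra_simps)
  finally show ?case using assms by (simp add: E_def)
qed

lemma det_matpow: "det (matpow (B::real^3^3) n) = det B ^ n"
  by (induction n) (simp_all add: matpow_Suc det_mul, simp add: matpow_def)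

lemma rauzyA_unipotent:
  assumes "i \<in> symbols"
  shows "(rauzyA i - mat 1) ** (rauzyA i - mat 1) = 0"
  using assms
  by (auto simp: symbols_def rauzyA_def A1_def A2_def A3_def vec_eq_iff forall_3 sum_3
      matrix_matrix_mult_def mat_def)

lemma det_rauzyA: "det (rauzyA i) = 1"
  by (simp add: rauzyA_def A1_def A2_def A3_def det_3)

lemma matrix_inv_eqI:
  fixes A :: "'a::semiring_1^'n^'n"
  assumes "A ** B = mat 1" and "B ** A = mat 1"
  shows "matrix_inv A = B"
proof -
  let ?A' = "matrix_inv A"
  have "A ** ?A' = mat 1 \<and> ?A' ** A = mat 1"
    unfolding matrix_inv_def by (rule someI[of _ B]) (use assms in simp)
  then have "?A' = (B ** A) ** ?A'" by (simp add: assms)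
  also have "\<dots> = B" by (simp add: matrix_mul_assoc[symmetric] \<open>A ** ?A' = mat 1 \<and> _\<close>)
  finally show ?thesis .
qed

definition rauzy_conjugator :: "real^3^3" where
  "rauzy_conjugator = vector [vector [6,-1,-1], vector [-1,6,-1], vector [-1,-1,6]]"

definition rauzy_conjugator_inv :: "real^3^3" where
  "rauzy_conjugator_inv =
     vector [vector [5/28,1/28,1/28], vector [1/28,5/28,1/28], vector [1/28,1/28,5/28]]"

lemma rauzy_conjugator_inverse:
  "rauzy_conjugator ** rauzy_conjugator_inv = mat 1"
  "rauzy_conjugator_inv ** rauzy_conjugator = mat 1"
  by (simp_all add: vec_eq_iff forall_3 sum_3 matrix_matrix_mult_def mat_def
      rauzy_conjugator_def rauzy_conjugator_inv_def)

lemma invertible_rauzy_conjugator: "invertible rauzy_conjugator"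
  using rauzy_conjugator_inverse invertible_def by blast

lemma matrix_inv_rauzy_conjugator: "matrix_inv rauzy_conjugator = rauzy_conjugator_inv"
  using rauzy_conjugator_inverse by (rule matrix_inv_eqI)

lemma rauzy_conjugate_entries_bounds:
  assumes "i \<in> symbols" "j \<in> symbols" "i \<noteq> j" "n \<ge> 1"
  defines "X \<equiv> rauzy_conjugator_inv ** (matpow (rauzyA i) n ** rauzyA j) ** rauzy_conjugator"
  shows "real n / 28 \<le> X $ a $ b \<and> X $ a $ b \<le> 55 * real n / 28"
proof -
  have "(i, j) \<in> {(1,2), (1,3), (2,1), (2,3), (3,1), (3,2)}"
    using assms(1-3) by (auto simp: symbols_def)
  then have "\<forall>a b. real n / 28 \<le> X $ a $ b \<and> X $ a $ b \<le> 55 * real n / 28"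
    using assms(4) unfolding X_def matpow_unipotent[OF rauzyA_unipotent[OF assms(1)]]
    by (auto simp: forall_3 sum_3 matrix_matrix_mult_def mat_def rauzyA_def A1_def A2_def A3_def
        rauzy_conjugator_def rauzy_conjugator_inv_def field_simps)
  then show ?thesis by blast
qed

lemma Min_div_Max_entries_ge:
  fixes X :: "real^'n^'m"
  assumes "0 < l" and "\<And>j k. l \<le> X $ j $ k \<and> X $ j $ k \<le> u"
  shows "l / u \<le> Min {X $ j $ k | j k. True} / Max {X $ j $ k | j k. True}"
proof -
  let ?S = "{X $ j $ k | j k. True}"
  have S: "?S = (\<lambda>(j, k). X $ j $ k) ` UNIV" by auto
  have fin: "finite ?S" "?S \<noteq> {}" unfolding S by auto
  have "l \<le> Min ?S" using fin assms(2) by (auto simp: Min_ge_iff)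
  moreover have "Max ?S \<le> u" using fin assms(2) by (auto simp: Max_le_iff)
  moreover have "0 < Max ?S" using fin assms by (auto simp: Max_gr_iff intro: less_le_trans)
  ultimately show ?thesis using assms(1) by (intro frac_le) auto
qed

lemma det_GammaSet: "B \<in> GammaSet \<Longrightarrow> det B = 1"
  by (auto simp: GammaSet_def det_mul det_matpow det_rauzyA)

lemma rauzy_conjugate_GammaSet:
  assumes "B \<in> GammaSet"
  defines "X \<equiv> matrix_inv rauzy_conjugator ** B ** rauzy_conjugator"
  shows "(\<forall>j k. X $ j $ k > 0) \<and> det X = 1 \<and>
    1 / 55 \<le> Min {X $ j $ k | j k. True} / Max {X $ j $ k | j k. True}"
proof -
  obtain i j n where B: "B = matpow (rauzyA i) n ** rauzyA j"
    and ij: "i \<in> symbols" "j \<in> symbols" "i \<noteq> j" and n: "n \<ge> 1"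
    using assms(1) unfolding GammaSet_def by blast
  have bounds: "real n / 28 \<le> X $ a $ b \<and> X $ a $ b \<le> 55 * real n / 28" for a b
    unfolding X_def matrix_inv_rauzy_conjugator B using rauzy_conjugate_entries_bounds[OF ij n] .
  have "det X = det (rauzy_conjugator_inv ** rauzy_conjugator)"
    by (simp add: X_def matrix_inv_rauzy_conjugator det_mul det_GammaSet[OF assms(1)])
  also have "\<dots> = 1" by (simp add: rauzy_conjugator_inverse)
  finally have "det X = 1" .
  moreover have "\<forall>j k. X $ j $ k > 0"
  proof (intro allI)
    fix j k
    have "0 < real n / 28" using n by simp
    then show "X $ j $ k > 0" using bounds[of j k] by linarith
  qed
  moreover have "real n / 28 / (55 * real n / 28) \<le>
      Min {X $ j $ k | j k. True} / Max {X $ j $ k | j k. True}"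
    using n by (intro Min_div_Max_entries_ge bounds) simp
  ultimately show ?thesis using n by simp
qed

theorem proposition6p5:
  shows "countable (rauzyGasket - KGamma) \<and>
    (\<exists>M :: real^3^3. invertible M \<and>
       (\<forall>B\<in>GammaSet. (\<forall>j k. (matrix_inv M ** B ** M) $ j $ k > 0) \<and>
                       det (matrix_inv M ** B ** M) = 1) \<and>
       (\<exists>c>0. \<forall>B\<in>GammaSet.
          Min {(matrix_inv M ** B ** M) $ j $ k | j k. True} /
          Max {(matrix_inv M ** B ** M) $ j $ k | j k. True} \<ge> c))"
proof -
  have "1 / 55 > (0::real)" by simp
  then show ?thesis
    using countable_rauzyGasket_diff_KGamma invertible_rauzy_conjugator rauzy_conjugate_GammaSet
    by blast
qed

end
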